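(* Let $\lambda=(\lambda_1,\dots,\lambda_r)$ be a partition of $n$ with conjugate $\lambda'=(\lambda'_1,\dots,\lambda'_{r'})$. Then $h_{2,1}(\lambda)$ is the largest index $j$ such that $x_j$ occurs in a monomial with non-zero coefficient of $q_{[\lambda_2,\dots,\lambda_r]}$, and $h_{1,2}(\lambda)$ is the largest index $j$ such that $x_j$ occurs in a monomial with non-zero coefficient of $q_{[\lambda'_2,\dots,\lambda'_{r'}]}$ (whenever these hook lengths are positive).
   Context: For a partition $\lambda$ and a cell $(x,y)$ of its Young diagram (row $x$, column $y$), $h_{x,y}(\lambda)$ denotes the hook length at $(x,y)$ (cells to the right in the row, plus cells below in the column, plus one); it is $0$ if $(x,y)$ is not a cell. For a partition $\mu$ of $m$, the character polynomial is $q_\mu(x_1,\dots,x_m)=\downarrow\Big(\sum_{\alpha\vdash m}\frac{\chi_\mu(\alpha)}{z_\alpha}\prod_{k=1}^m (k x_k-1)^{a_k}\Big)$, where $\alpha=(1^{a_1},\dots,m^{a_m})$ ranges over cycle types of $S_m$, $\chi_\mu$ is the irreducible character of $S_m$ indexed by $\mu$, $z_\alpha=\prod_k a_k!\,k^{a_k}$, and $\downarrow$ is the linear map sending $x_1^{c_1}\cdots x_m^{c_m}$ to $(x_1)_{c_1}\cdots(x_m)_{c_m}$ (falling factorials). One has $\chi_\lambda(\alpha)=q_{[\lambda_2,\dots,\lambda_r]}(a_1,\dots,a_{n-\lambda_1})$. *)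

theory Defs
  imports Complex_Main "HOL-Library.Poly_Mapping"
begin

text \<open>A partition is a weakly decreasing list of positive naturals
  (lam ! 0 = lambda_1, ...).\<close>
definition is_partition :: "nat list \<Rightarrow> bool" where
  "is_partition lam \<longleftrightarrow> sorted_wrt (\<lambda>a b. b \<le> a) lam \<and> 0 \<notin> set lam"

definition conjugate :: "nat list \<Rightarrow> nat list" where
  "conjugate lam = (if lam = [] then []
     else map (\<lambda>j. length (filter (\<lambda>x. j \<le> x) lam)) [1..<Suc (hd lam)])"

text \<open>Hook length at cell (x,y) (row x, column y, both 1-based); 0 if not a cell.\<close>
definition hook :: "nat list \<Rightarrow> nat \<Rightarrow> nat \<Rightarrow> nat" where
  "hook lam x y = (if 1 \<le> x \<and> x \<le> length lam \<and> 1 \<le> y \<and> y \<le> lam ! (x - 1)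
     then (lam ! (x - 1) - y) + (conjugate lam ! (y - 1) - x) + 1 else 0)"

definition beta_set :: "nat list \<Rightarrow> nat set" where
  "beta_set lam = {lam ! i + (length lam - 1 - i) | i. i < length lam}"

text \<open>Murnaghan--Nakayama: removing a rim hook of length k corresponds to moving a bead
  b to b - k (unoccupied); the sign is (-1)^(leg length) = (-1)^(number of beads
  strictly between b - k and b).\<close>
fun mn :: "nat set \<Rightarrow> nat list \<Rightarrow> int" where
  "mn B [] = (if B = {0..<card B} then 1 else 0)"
| "mn B (k # ks) =
     (\<Sum>b\<in>{b\<in>B. k \<le> b \<and> b - k \<notin> B}.
        (-1) ^ card {c\<in>B. b - k < c \<and> c < b} * mn (insert (b - k) (B - {b})) ks)"

text \<open>chi lam alpha: value of the irreducible character of S_n indexed by the partition lam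
  on the conjugacy class of cycle type alpha (a list of the cycle lengths).\<close>
definition chi :: "nat list \<Rightarrow> nat list \<Rightarrow> int" where
  "chi lam alpha = mn (beta_set lam) alpha"

definition partitions_of :: "nat \<Rightarrow> nat list set" where
  "partitions_of m = {alpha. is_partition alpha \<and> sum_list alpha = m}"

definition zee :: "nat list \<Rightarrow> nat" where
  "zee alpha = (\<Prod>k\<in>set alpha. fact (count_list alpha k) * k ^ count_list alpha k)"

type_synonym mpoly = "(nat \<Rightarrow>\<^sub>0 nat) \<Rightarrow>\<^sub>0 rat"

definition Var :: "nat \<Rightarrow> mpoly" where
  "Var k = Poly_Mapping.single (Poly_Mapping.single k 1) 1"

definition Const :: "rat \<Rightarrow> mpoly" where
  "Const c = Poly_Mapping.single 0 c"

definition ffact_var :: "nat \<Rightarrow> nat \<Rightarrow> mpoly" where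
  "ffact_var k n = (\<Prod>i<n. Var k - of_nat i)"

definition down :: "mpoly \<Rightarrow> mpoly" where
  "down p = (\<Sum>c\<in>Poly_Mapping.keys p. Const (Poly_Mapping.lookup p c) *
              (\<Prod>k\<in>Poly_Mapping.keys c. ffact_var k (Poly_Mapping.lookup c k)))"

definition occurring_vars :: "mpoly \<Rightarrow> nat set" where
  "occurring_vars p = (\<Union>c\<in>Poly_Mapping.keys p. Poly_Mapping.keys c)"

definition charpoly :: "nat list \<Rightarrow> mpoly" where
  "charpoly mu = down (\<Sum>alpha\<in>partitions_of (sum_list mu).
      Const (of_int (chi mu alpha) / of_nat (zee alpha)) *
      prod_list (map (\<lambda>k. of_nat k * Var k - 1) alpha))"

end

theory Submission
  imports Defs "HOL-Library.Multiset"
begin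

text \<open>
  For a nonempty partition \<open>\<mu>\<close> of \<open>m\<close> let \<open>h = h\<^sub>1\<^sub>,\<^sub>1(\<mu>) = \<mu>\<^sub>1 + \<ell>(\<mu>) - 1\<close>,
  the largest bead of the beta-set of \<open>\<mu>\<close>. Give \<open>x\<^sub>k\<close> the weight \<open>k\<close>. For a cycle
  type \<open>\<alpha>\<close>, the product \<open>\<Prod>(k x\<^sub>k - 1)\<close> and its image under \<open>\<down>\<close> only contain
  monomials dividing \<open>x\<^sup>\<alpha>\<close>, which has weight \<open>m\<close>, and among these only \<open>x\<^sup>\<alpha>\<close>
  itself has weight \<open>m\<close>. Hence the coefficient of \<open>x\<^sup>\<alpha>\<close> in \<open>q\<^sub>\<mu>\<close> is
  \<open>\<chi>\<^sub>\<mu>(\<alpha>) \<Prod>\<alpha> / z\<^sub>\<alpha>\<close>, and every variable of \<open>q\<^sub>\<mu>\<close> is a part of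
  some \<open>\<alpha>\<close> with \<open>\<chi>\<^sub>\<mu>(\<alpha>) \<noteq> 0\<close>. By Murnaghan--Nakayama no bead can move down by
  more than \<open>h\<close>, so these parts are at most \<open>h\<close>; and for \<open>\<alpha> = (h, 1, \<dots>, 1)\<close> the
  only \<open>h\<close>-move takes the top bead to \<open>0\<close>, after which the value on the remaining fixed
  points is a dimension, hence positive. The corollary follows because \<open>h\<^sub>2\<^sub>,\<^sub>1(\<lambda>)\<close>
  and \<open>h\<^sub>1\<^sub>,\<^sub>2(\<lambda>)\<close> are the first hook lengths of \<open>(\<lambda>\<^sub>2, \<dots>)\<close> and
  \<open>(\<lambda>'\<^sub>2, \<dots>)\<close>.
\<close>

section \<open>Divisibility of monomials\<close>

definition monom_dvd :: "('v \<Rightarrow>\<^sub>0 nat) \<Rightarrow> ('v \<Rightarrow>\<^sub>0 nat) \<Rightarrow> bool" where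
  "monom_dvd d e \<longleftrightarrow> (\<forall>k. Poly_Mapping.lookup d k \<le> Poly_Mapping.lookup e k)"

lemma monom_dvd_refl [simp]: "monom_dvd d d"
  by (simp add: monom_dvd_def)

lemma zero_monom_dvd [simp]: "monom_dvd 0 d"
  by (simp add: monom_dvd_def)

lemma monom_dvd_trans: "monom_dvd d e \<Longrightarrow> monom_dvd e f \<Longrightarrow> monom_dvd d f"
  unfolding monom_dvd_def using le_trans by blast

lemma monom_dvd_antisym: "monom_dvd d e \<Longrightarrow> monom_dvd e d \<Longrightarrow> d = e"
  unfolding monom_dvd_def by (simp add: poly_mapping_eqI order_antisym)

lemma monom_dvd_add: "monom_dvd a b \<Longrightarrow> monom_dvd c d \<Longrightarrow> monom_dvd (a + c) (b + d)"
  by (simp add: monom_dvd_def lookup_add add_mono)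

lemma monom_dvd_add_eqD:
  assumes "monom_dvd x a" "monom_dvd y b" "x + y = a + b"
  shows "x = a \<and> y = b"
proof -
  have sum: "Poly_Mapping.lookup x k + Poly_Mapping.lookup y k =
      Poly_Mapping.lookup a k + Poly_Mapping.lookup b k" for k
    using assms(3) by (metis lookup_add)
  have le: "Poly_Mapping.lookup x k \<le> Poly_Mapping.lookup a k"
    "Poly_Mapping.lookup y k \<le> Poly_Mapping.lookup b k" for k
    using assms(1,2) by (auto simp: monom_dvd_def)
  have "Poly_Mapping.lookup x k = Poly_Mapping.lookup a k"
    "Poly_Mapping.lookup y k = Poly_Mapping.lookup b k" for k
    using sum[of k] le[of k] by linarith+
  then show ?thesis by (simp add: poly_mapping_eqI)
qed

lemma keys_subset_if_monom_dvd: "monom_dvd d e \<Longrightarrow> Poly_Mapping.keys d \<subseteq> Poly_Mapping.keys e"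
  by (auto simp: monom_dvd_def in_keys_iff) (meson less_le_trans)

definition monoms_dvd :: "(('v \<Rightarrow>\<^sub>0 nat) \<Rightarrow>\<^sub>0 'a::zero) \<Rightarrow> ('v \<Rightarrow>\<^sub>0 nat) \<Rightarrow> bool" where
  "monoms_dvd p a \<longleftrightarrow> (\<forall>d\<in>Poly_Mapping.keys p. monom_dvd d a)"

lemma monoms_dvd_one [simp]: "monoms_dvd (1 :: ('v \<Rightarrow>\<^sub>0 nat) \<Rightarrow>\<^sub>0 'a::zero_neq_one) 0"
  by (simp add: monoms_dvd_def)

lemma monoms_dvd_mult:
  fixes f g :: "('v \<Rightarrow>\<^sub>0 nat) \<Rightarrow>\<^sub>0 'a::semiring_0"
  assumes "monoms_dvd f a" "monoms_dvd g b"
  shows "monoms_dvd (f * g) (a + b)"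
  using keys_mult[of f g] assms by (fastforce simp: monoms_dvd_def intro: monom_dvd_add)

lemma lookup_mult_at_bound:
  fixes f g :: "('v \<Rightarrow>\<^sub>0 nat) \<Rightarrow>\<^sub>0 'a::semiring_0"
  assumes f: "monoms_dvd f a" and g: "monoms_dvd g b"
  shows "Poly_Mapping.lookup (f * g) (a + b) = Poly_Mapping.lookup f a * Poly_Mapping.lookup g b"
proof -
  \<comment> \<open>the only pair of monomials of \<open>f\<close> and \<open>g\<close> with product \<open>a + b\<close> is \<open>(a, b)\<close>\<close>
  have "Poly_Mapping.lookup f l * (\<Sum>q. Poly_Mapping.lookup g q when a + b = l + q) =
      (Poly_Mapping.lookup f a * Poly_Mapping.lookup g b when l = a)" for l
  proof (cases "l \<in> Poly_Mapping.keys f")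
    case True
    have "(\<Sum>q. Poly_Mapping.lookup g q when a + b = l + q) =
        (\<Sum>q. if q = b then (Poly_Mapping.lookup g b when l = a) else 0)"
    proof (rule Sum_any.cong)
      fix q
      show "(Poly_Mapping.lookup g q when a + b = l + q) =
          (if q = b then (Poly_Mapping.lookup g b when l = a) else 0)"
      proof (cases "q \<in> Poly_Mapping.keys g")
        case True
        with \<open>l \<in> Poly_Mapping.keys f\<close> f g have "monom_dvd l a" "monom_dvd q b"
          by (auto simp: monoms_dvd_def)
        then show ?thesis by (auto simp: when_def dest: monom_dvd_add_eqD)
      qed (auto simp: when_def in_keys_iff)
    qed
    then show ?thesis by (simp add: when_def)
  qed (auto simp: when_def in_keys_iff)
  then show ?thesis
    by (simp add: lookup_mult when_def)
qed

lemma monoms_dvd_prod: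
  fixes F :: "'i \<Rightarrow> ('v \<Rightarrow>\<^sub>0 nat) \<Rightarrow>\<^sub>0 'a::comm_semiring_1"
  assumes "finite I" "\<And>i. i \<in> I \<Longrightarrow> monoms_dvd (F i) (A i)"
  shows "monoms_dvd (\<Prod>i\<in>I. F i) (\<Sum>i\<in>I. A i)"
  using assms by (induction I rule: finite_induct) (simp_all add: monoms_dvd_mult)

lemma lookup_prod_at_bound:
  fixes F :: "'i \<Rightarrow> ('v \<Rightarrow>\<^sub>0 nat) \<Rightarrow>\<^sub>0 'a::comm_semiring_1"
  assumes "finite I" "\<And>i. i \<in> I \<Longrightarrow> monoms_dvd (F i) (A i)"
  shows "Poly_Mapping.lookup (\<Prod>i\<in>I. F i) (\<Sum>i\<in>I. A i) = (\<Prod>i\<in>I. Poly_Mapping.lookup (F i) (A i))"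
  using assms
  by (induction I rule: finite_induct) (simp_all add: lookup_mult_at_bound monoms_dvd_prod)

section \<open>Falling factorials and the operator \<open>down\<close>\<close>

lemma lookup_Const_mult:
  "Poly_Mapping.lookup (Const a * p) m = a * Poly_Mapping.lookup p m"
  unfolding Const_def mult_map_scale_conv_mult[symmetric] by (simp add: map.rep_eq when_def)

lemma Const_mult_Var: "Const a * Var k = Poly_Mapping.single (Poly_Mapping.single k 1) a"
  unfolding Const_def Var_def by (simp add: mult_single)

lemma single_one_neq_zero: "Poly_Mapping.single k (1::nat) \<noteq> 0"
  by (metis lookup_single_eq lookup_zero one_neq_zero)

lemma monoms_dvd_linear: "monoms_dvd (Const a * Var k - Const b) (Poly_Mapping.single k 1)"
  unfolding monoms_dvd_def Const_mult_Var unfolding Const_def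
  by (auto simp: in_keys_iff lookup_minus lookup_single when_def split: if_splits)

lemma lookup_linear:
  "Poly_Mapping.lookup (Const a * Var k - Const b) (Poly_Mapping.single k 1) = a"
  unfolding Const_mult_Var unfolding Const_def using single_one_neq_zero[of k]
  by (simp add: lookup_minus lookup_single when_def)

lemma Var_minus_of_nat: "Var k - of_nat i = Const 1 * Var k - Const (of_nat i)"
  by (simp add: Const_def)

lemma sum_lessThan_single: "(\<Sum>i<n. Poly_Mapping.single k (1::nat)) = Poly_Mapping.single k n"
  by (induction n) (simp_all add: single_add[symmetric])

lemma monoms_dvd_ffact_var: "monoms_dvd (ffact_var k n) (Poly_Mapping.single k n)"
  using monoms_dvd_prod[of "{..<n}" "\<lambda>i. Const 1 * Var k - Const (of_nat i)"
      "\<lambda>i. Poly_Mapping.single k 1"] monoms_dvd_linear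
  unfolding ffact_var_def Var_minus_of_nat sum_lessThan_single by blast

lemma lookup_ffact_var: "Poly_Mapping.lookup (ffact_var k n) (Poly_Mapping.single k n) = 1"
proof -
  have "Poly_Mapping.lookup (ffact_var k n) (Poly_Mapping.single k n) =
      (\<Prod>i<n. Poly_Mapping.lookup (Const 1 * Var k - Const (of_nat i)) (Poly_Mapping.single k 1))"
    using lookup_prod_at_bound[of "{..<n}" "\<lambda>i. Const 1 * Var k - Const (of_nat i)"
        "\<lambda>i. Poly_Mapping.single k 1"] monoms_dvd_linear
    unfolding ffact_var_def Var_minus_of_nat sum_lessThan_single by blast
  then show ?thesis by (simp only: lookup_linear prod.neutral_const)
qed

definition ffact_monom :: "(nat \<Rightarrow>\<^sub>0 nat) \<Rightarrow> mpoly" where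
  "ffact_monom c = (\<Prod>k\<in>Poly_Mapping.keys c. ffact_var k (Poly_Mapping.lookup c k))"

lemma sum_single_lookup_keys:
  "(\<Sum>k\<in>Poly_Mapping.keys c. Poly_Mapping.single k (Poly_Mapping.lookup c k)) = c"
  by (rule poly_mapping_eqI) (simp add: lookup_sum lookup_single when_def in_keys_iff)

lemma monoms_dvd_ffact_monom: "monoms_dvd (ffact_monom c) c"
  using monoms_dvd_prod[of "Poly_Mapping.keys c" "\<lambda>k. ffact_var k (Poly_Mapping.lookup c k)"
      "\<lambda>k. Poly_Mapping.single k (Poly_Mapping.lookup c k)"]
  unfolding ffact_monom_def sum_single_lookup_keys by (simp add: monoms_dvd_ffact_var)

lemma lookup_ffact_monom: "Poly_Mapping.lookup (ffact_monom c) c = 1"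
  using lookup_prod_at_bound[of "Poly_Mapping.keys c" "\<lambda>k. ffact_var k (Poly_Mapping.lookup c k)"
      "\<lambda>k. Poly_Mapping.single k (Poly_Mapping.lookup c k)"]
  unfolding ffact_monom_def sum_single_lookup_keys
  by (simp add: monoms_dvd_ffact_var lookup_ffact_var)

lemma down_eq: "down p = (\<Sum>c\<in>Poly_Mapping.keys p. Const (Poly_Mapping.lookup p c) * ffact_monom c)"
  by (simp add: down_def ffact_monom_def)

lemma lookup_down:
  "Poly_Mapping.lookup (down p) m =
    (\<Sum>c\<in>Poly_Mapping.keys p. Poly_Mapping.lookup p c * Poly_Mapping.lookup (ffact_monom c) m)"
  by (simp add: down_eq lookup_sum lookup_Const_mult)

lemma keys_Const_mult: "Poly_Mapping.keys (Const a * p) \<subseteq> Poly_Mapping.keys p"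
  by (auto simp: in_keys_iff lookup_Const_mult)

lemma keys_down:
  assumes "d \<in> Poly_Mapping.keys (down p)"
  shows "\<exists>c\<in>Poly_Mapping.keys p. monom_dvd d c"
proof -
  obtain c where "c \<in> Poly_Mapping.keys p"
    and "d \<in> Poly_Mapping.keys (Const (Poly_Mapping.lookup p c) * ffact_monom c)"
    using subsetD[OF keys_sum assms[unfolded down_eq]] by blast
  then have "d \<in> Poly_Mapping.keys (ffact_monom c)"
    using keys_Const_mult by blast
  with \<open>c \<in> Poly_Mapping.keys p\<close> monoms_dvd_ffact_monom[of c] show ?thesis
    unfolding monoms_dvd_def by blast
qed

lemma occurring_vars_down: "occurring_vars (down p) \<subseteq> occurring_vars p"
proof
  fix j assume "j \<in> occurring_vars (down p)"
  then obtain d where d: "d \<in> Poly_Mapping.keys (down p)" and "j \<in> Poly_Mapping.keys d"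
    unfolding occurring_vars_def by blast
  moreover obtain c where "c \<in> Poly_Mapping.keys p" and "monom_dvd d c"
    using keys_down[OF d] by blast
  ultimately show "j \<in> occurring_vars p"
    unfolding occurring_vars_def using keys_subset_if_monom_dvd by blast
qed

lemma lookup_down_maximal:
  assumes "\<And>c. c \<in> Poly_Mapping.keys p \<Longrightarrow> monom_dvd m c \<Longrightarrow> c = m"
  shows "Poly_Mapping.lookup (down p) m = Poly_Mapping.lookup p m"
proof -
  have "Poly_Mapping.lookup (down p) m =
      (\<Sum>c\<in>Poly_Mapping.keys p. if c = m then Poly_Mapping.lookup p m else 0)"
    unfolding lookup_down
  proof (rule sum.cong)
    fix c assume c: "c \<in> Poly_Mapping.keys p"
    show "Poly_Mapping.lookup p c * Poly_Mapping.lookup (ffact_monom c) m =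
        (if c = m then Poly_Mapping.lookup p m else 0)"
    proof (cases "c = m")
      case False
      then have "m \<notin> Poly_Mapping.keys (ffact_monom c)"
        using assms[OF c] monoms_dvd_ffact_monom[of c] unfolding monoms_dvd_def by blast
      with False show ?thesis by (simp add: in_keys_iff)
    qed (simp add: lookup_ffact_monom)
  qed simp
  then show ?thesis by (simp add: in_keys_iff)
qed

definition cycle_monom :: "nat list \<Rightarrow> (nat \<Rightarrow>\<^sub>0 nat)" where
  "cycle_monom alpha = (\<Sum>k\<leftarrow>alpha. Poly_Mapping.single k 1)"

definition cycle_prod :: "nat list \<Rightarrow> mpoly" where
  "cycle_prod alpha = (\<Prod>k\<leftarrow>alpha. of_nat k * Var k - 1)"

lemma lookup_cycle_monom: "Poly_Mapping.lookup (cycle_monom alpha) j = count_list alpha j"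
  by (induction alpha) (auto simp: cycle_monom_def lookup_add lookup_single)

lemma keys_cycle_monom: "Poly_Mapping.keys (cycle_monom alpha) = set alpha"
  by (auto simp: in_keys_iff lookup_cycle_monom count_list_0_iff)

lemma cycle_monom_Cons:
  "cycle_monom (k # alpha) = Poly_Mapping.single k 1 + cycle_monom alpha"
  by (simp add: cycle_monom_def)

lemma cycle_prod_Cons:
  "cycle_prod (k # alpha) = (Const (of_nat k) * Var k - Const 1) * cycle_prod alpha"
  by (simp add: cycle_prod_def Const_def)

lemma monoms_dvd_cycle_prod: "monoms_dvd (cycle_prod alpha) (cycle_monom alpha)"
proof (induction alpha)
  case (Cons k alpha)
  show ?case
    unfolding cycle_prod_Cons cycle_monom_Cons
    by (rule monoms_dvd_mult[OF monoms_dvd_linear Cons.IH])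
qed (simp add: cycle_prod_def cycle_monom_def)

lemma lookup_cycle_prod:
  "Poly_Mapping.lookup (cycle_prod alpha) (cycle_monom alpha) = of_nat (prod_list alpha)"
proof (induction alpha)
  case (Cons k alpha)
  show ?case
    unfolding cycle_prod_Cons cycle_monom_Cons
      lookup_mult_at_bound[OF monoms_dvd_linear monoms_dvd_cycle_prod] lookup_linear Cons.IH
    by simp
qed (simp add: cycle_prod_def cycle_monom_def)

definition weight :: "(nat \<Rightarrow>\<^sub>0 nat) \<Rightarrow> nat" where
  "weight d = (\<Sum>k\<in>Poly_Mapping.keys d. k * Poly_Mapping.lookup d k)"

lemma weight_cycle_monom: "weight (cycle_monom alpha) = sum_list alpha"
  unfolding weight_def keys_cycle_monom lookup_cycle_monom
  using sum_list_map_eq_sum_count[of "\<lambda>x. x" alpha] by (simp add: mult.commute)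

lemma weight_less:
  assumes "monom_dvd d e" "d \<noteq> e" "0 \<notin> Poly_Mapping.keys e"
  shows "weight d < weight e"
proof -
  obtain j where j: "Poly_Mapping.lookup d j \<noteq> Poly_Mapping.lookup e j"
    using assms(2) by (meson poly_mapping_eqI)
  with assms(1) have less: "Poly_Mapping.lookup d j < Poly_Mapping.lookup e j"
    by (simp add: monom_dvd_def le_neq_trans)
  then have "j \<in> Poly_Mapping.keys e" "j \<noteq> 0"
    using assms(3) by (cases "j = 0"; simp add: in_keys_iff)+
  have "weight d = (\<Sum>k\<in>Poly_Mapping.keys e. k * Poly_Mapping.lookup d k)"
    unfolding weight_def using keys_subset_if_monom_dvd[OF assms(1)]
    by (intro sum.mono_neutral_left) (simp_all add: in_keys_iff)
  also have "\<dots> < (\<Sum>k\<in>Poly_Mapping.keys e. k * Poly_Mapping.lookup e k)"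
    using assms(1) less \<open>j \<in> Poly_Mapping.keys e\<close> \<open>j \<noteq> 0\<close>
    by (intro sum_strict_mono_ex1) (auto simp: monom_dvd_def)
  finally show ?thesis unfolding weight_def .
qed

lemma cycle_monom_inj:
  assumes "is_partition a" "is_partition b" "cycle_monom a = cycle_monom b"
  shows "a = b"
proof -
  have "count (mset a) x = count (mset b) x" for x
    using arg_cong[OF assms(3), of "\<lambda>m. Poly_Mapping.lookup m x"]
    by (simp add: lookup_cycle_monom count_mset)
  then have "mset (rev b) = mset (rev a)"
    by (simp add: multiset_eqI)
  moreover have "sorted (rev a)" "sorted (rev b)"
    using assms(1,2) unfolding is_partition_def sorted_wrt_rev by simp_all
  ultimately have "rev a = rev b"
    using properties_for_sort sorted_sort_id by metis
  then show ?thesis by simp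
qed

lemma cycle_monom_dvd_imp_eq:
  assumes "is_partition a" "is_partition b" "sum_list a = sum_list b"
    and "monom_dvd (cycle_monom a) (cycle_monom b)"
  shows "a = b"
proof (rule cycle_monom_inj[OF assms(1,2)], rule ccontr)
  assume "cycle_monom a \<noteq> cycle_monom b"
  moreover have "0 \<notin> Poly_Mapping.keys (cycle_monom b)"
    using assms(2) by (simp add: keys_cycle_monom is_partition_def)
  ultimately have "weight (cycle_monom a) < weight (cycle_monom b)"
    using weight_less[OF assms(4)] by blast
  with assms(3) show False by (simp add: weight_cycle_monom)
qed

lemma is_partition_pos: "is_partition lam \<Longrightarrow> x \<in> set lam \<Longrightarrow> 0 < x"
  unfolding is_partition_def by (metis gr0I)

lemma is_partition_tl: "is_partition lam \<Longrightarrow> is_partition (tl lam)"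
  unfolding is_partition_def by (cases lam) auto

lemma is_partition_nth_le:
  assumes "is_partition lam" "j \<le> i" "i < length lam"
  shows "lam ! i \<le> lam ! j"
  using assms sorted_wrt_nth_less[of "\<lambda>a b. b \<le> a" lam j i]
  unfolding is_partition_def by (cases "j = i") auto

lemma conjugate_eq_map:
  "lam \<noteq> [] \<Longrightarrow> conjugate lam = map (\<lambda>j. length (filter (\<lambda>x. j \<le> x) lam)) [1..<Suc (hd lam)]"
  by (simp add: conjugate_def del: upt_Suc)

lemma length_conjugate: "lam \<noteq> [] \<Longrightarrow> length (conjugate lam) = hd lam"
  by (simp add: conjugate_eq_map del: upt_Suc)

lemma nth_conjugate:
  "lam \<noteq> [] \<Longrightarrow> j < hd lam \<Longrightarrow> conjugate lam ! j = length (filter (\<lambda>x. Suc j \<le> x) lam)"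
  by (simp add: conjugate_eq_map del: upt_Suc)

lemma conjugate_nth_0:
  assumes "is_partition lam" "lam \<noteq> []"
  shows "conjugate lam ! 0 = length lam"
proof -
  have "0 < hd lam" "filter (\<lambda>x. Suc 0 \<le> x) lam = lam"
    using assms is_partition_pos[OF assms(1)] by (auto simp: filter_id_conv Suc_le_eq)
  with assms(2) show ?thesis by (simp add: nth_conjugate)
qed

lemma is_partition_conjugate:
  assumes "is_partition lam"
  shows "is_partition (conjugate lam)"
proof (cases "lam = []")
  case False
  define g where "g j = length (filter (\<lambda>x. j \<le> x) lam)" for j
  have "g j' \<le> g j" if "j \<le> j'" for j j'
    unfolding g_def using that by (induction lam) auto
  then have "sorted_wrt (\<lambda>a b. b \<le> a) (map g [1..<Suc (hd lam)])"
    unfolding sorted_wrt_map by (rule sorted_wrt_mono_rel[OF _ sorted_wrt_upt]) simp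
  moreover have "0 < g j" if "j \<le> hd lam" for j
  proof -
    have "hd lam \<in> set (filter (\<lambda>x. j \<le> x) lam)" using that False by simp
    then show ?thesis unfolding g_def by (rule length_pos_if_in_set)
  qed
  then have "0 \<notin> set (map g [1..<Suc (hd lam)])"
    by (force simp: less_Suc_eq_le simp del: upt_Suc)
  ultimately show ?thesis
    using False unfolding is_partition_def conjugate_eq_map[OF False] g_def by simp
qed (simp add: conjugate_def is_partition_def)

lemma hook_1_1:
  assumes "is_partition mu" "mu \<noteq> []"
  shows "hook mu 1 1 = hd mu + length mu - 1"
proof -
  have "0 < mu ! 0" "length mu = Suc (length (tl mu))"
    using assms is_partition_pos[OF assms(1), of "mu ! 0"] by auto
  then show ?thesis by (simp add: hook_def conjugate_nth_0[OF assms] hd_conv_nth[OF assms(2)])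
qed

lemma hook_2_1_eq_hook_tl:
  assumes "is_partition lam"
  shows "hook lam 2 1 = hook (tl lam) 1 1"
proof (cases "2 \<le> length lam")
  case True
  then obtain x y ys where lam: "lam = x # y # ys"
    by (metis Suc_le_length_iff numeral_2_eq_2)
  with is_partition_pos[OF assms] have "0 < y" by simp
  with lam show ?thesis
    using hook_1_1[OF is_partition_tl[OF assms]] conjugate_nth_0[OF assms]
    by (simp add: hook_def)
next
  case False
  then have "length (tl lam) = 0" by simp
  with False show ?thesis by (simp add: hook_def)
qed

lemma hook_1_2_eq_hook_tl_conjugate:
  assumes "is_partition lam"
  shows "hook lam 1 2 = hook (tl (conjugate lam)) 1 1"
proof (cases "lam \<noteq> [] \<and> 2 \<le> hd lam")
  case True
  have P: "is_partition (conjugate lam)"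
    using is_partition_conjugate[OF assms] .
  have len: "length (conjugate lam) = hd lam"
    using True by (simp add: length_conjugate)
  with True obtain c0 c1 cs where c: "conjugate lam = c0 # c1 # cs"
    by (metis Suc_le_length_iff numeral_2_eq_2)
  with is_partition_pos[OF P] have "0 < c1" by simp
  moreover have "hook (c1 # cs) 1 1 = c1 + length cs"
    using hook_1_1[OF is_partition_tl[OF P]] c by simp
  ultimately show ?thesis
    using True c len by (simp add: hook_def hd_conv_nth Suc_le_eq)
next
  case False
  then have "length (conjugate lam) \<le> 1"
    by (cases "lam = []") (simp_all add: conjugate_def length_conjugate)
  then have "tl (conjugate lam) = []"
    by (cases "conjugate lam") auto
  with False show ?thesis by (auto simp: hook_def hd_conv_nth Suc_le_eq)
qed

lemma length_le_sum_list: "is_partition lam \<Longrightarrow> length lam \<le> sum_list lam"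
proof (induction lam)
  case (Cons a lam)
  have "is_partition lam"
    using is_partition_tl[OF Cons.prems] by simp
  with Cons show ?case
    using is_partition_pos[OF Cons.prems, of a] by simp
qed simp

lemma hook_1_1_le_sum_list:
  assumes "is_partition mu"
  shows "hook mu 1 1 \<le> sum_list mu"
proof (cases mu)
  case (Cons x xs)
  with length_le_sum_list[OF is_partition_tl[OF assms]] show ?thesis
    using hook_1_1[OF assms] by simp
qed (simp add: hook_def)

section \<open>Beta-sets and character values\<close>

definition bead :: "nat list \<Rightarrow> nat \<Rightarrow> nat" where
  "bead mu i = mu ! i + (length mu - 1 - i)"

lemma beta_set_eq_image: "beta_set mu = bead mu ` {..<length mu}"
  unfolding beta_set_def bead_def by blast

lemma bead_less:
  assumes "is_partition mu" "i < j" "j < length mu"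
  shows "bead mu j < bead mu i"
  using is_partition_nth_le[OF assms(1), of i j] assms(2,3) unfolding bead_def by simp

lemma inj_on_bead: "is_partition mu \<Longrightarrow> inj_on (bead mu) {..<length mu}"
  unfolding inj_on_def by (metis bead_less lessThan_iff less_irrefl linorder_neqE_nat)

lemma card_beta_set: "is_partition mu \<Longrightarrow> card (beta_set mu) = length mu"
  by (simp add: beta_set_eq_image card_image inj_on_bead)

lemma sum_beta_set:
  assumes "is_partition mu"
  shows "\<Sum> (beta_set mu) = sum_list mu + (\<Sum>i<length mu. i)"
proof -
  have "\<Sum> (beta_set mu) = (\<Sum>i<length mu. bead mu i)"
    by (simp add: beta_set_eq_image sum.reindex inj_on_bead[OF assms])
  also have "\<dots> = (\<Sum>i<length mu. mu ! i) + (\<Sum>i<length mu. length mu - Suc i)"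
    unfolding bead_def diff_diff_left plus_1_eq_Suc by (rule sum.distrib)
  also have "(\<Sum>i<length mu. length mu - Suc i) = (\<Sum>i<length mu. i)"
    using sum.nat_diff_reindex[of "\<lambda>i. i" "length mu"] by simp
  finally show ?thesis
    by (simp add: sum_list_sum_nth atLeast0LessThan)
qed

lemma bead_0_eq_hook: "is_partition mu \<Longrightarrow> mu \<noteq> [] \<Longrightarrow> bead mu 0 = hook mu 1 1"
  unfolding hook_1_1 by (cases mu) (simp_all add: bead_def)

lemma hook_in_beta_set:
  assumes "is_partition mu" "mu \<noteq> []"
  shows "hook mu 1 1 \<in> beta_set mu"
  unfolding bead_0_eq_hook[OF assms, symmetric] beta_set_eq_image using assms(2) by simp

lemma beta_set_le_hook:
  assumes "is_partition mu" "b \<in> beta_set mu"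
  shows "b \<le> hook mu 1 1"
proof -
  obtain i where i: "i < length mu" "b = bead mu i"
    using assms(2) by (auto simp: beta_set_eq_image)
  then have "bead mu i \<le> bead mu 0"
    using bead_less[OF assms(1), of 0 i] by (cases "i = 0") auto
  moreover have "mu \<noteq> []" using i(1) by auto
  ultimately show ?thesis using i(2) bead_0_eq_hook[OF assms(1)] by simp
qed

lemma zero_notin_beta_set:
  assumes "is_partition mu"
  shows "0 \<notin> beta_set mu"
proof
  assume "0 \<in> beta_set mu"
  then obtain i where i: "i < length mu" "bead mu i = 0"
    by (auto simp: beta_set_eq_image)
  have "0 < mu ! i" using is_partition_pos[OF assms nth_mem[OF i(1)]] .
  with i(2) show False by (simp add: bead_def)
qed

lemma exists_bead_above_gap:
  assumes "j \<notin> (B :: nat set)" "c \<in> B" "j < c"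
  shows "\<exists>b\<in>B. j < b \<and> b - 1 \<notin> B"
  using assms(2,3)
proof (induction c)
  case (Suc c)
  show ?case
  proof (cases "c \<in> B")
    case True
    with assms(1) Suc.prems(2) have "j < c" by (cases "j = c") auto
    with True show ?thesis by (rule Suc.IH)
  qed (use Suc.prems in auto)
qed simp

lemma exists_movable_bead:
  assumes "finite (B :: nat set)" "B \<noteq> {0..<card B}"
  shows "\<exists>b\<in>B. 0 < b \<and> b - 1 \<notin> B"
proof -
  have "\<not> B \<subseteq> {0..<card B}"
    using assms card_subset_eq[of "{0..<card B}" B] by auto
  then obtain c where c: "c \<in> B" "card B \<le> c" by (auto simp: subset_iff not_less)
  have "\<not> {0..<card B} \<subseteq> B"
  proof
    assume "{0..<card B} \<subseteq> B"
    then have "insert c {0..<card B} \<subseteq> B" using c(1) by simp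
    then have "card (insert c {0..<card B}) \<le> card B" using assms(1) card_mono by blast
    with c(2) show False by simp
  qed
  then obtain j where "j < card B" "j \<notin> B" by (auto simp: subset_iff)
  with c exists_bead_above_gap[of j B c] show ?thesis by fastforce
qed

lemma card_move_bead:
  assumes "finite (B :: nat set)" "b \<in> B" "b - 1 \<notin> B"
  shows "card (insert (b - 1) (B - {b})) = card B"
proof -
  have "0 < card B" using assms(1,2) card_gt_0_iff by blast
  with assms show ?thesis by simp
qed

lemma sum_move_bead:
  assumes "finite (B :: nat set)" "b \<in> B" "0 < b" "b - 1 \<notin> B"
  shows "\<Sum> (insert (b - 1) (B - {b})) + 1 = \<Sum> B"
proof -
  have "\<Sum> B = b + \<Sum> (B - {b})"
    using assms(1,2) by (rule sum.remove)
  moreover have "\<Sum> (insert (b - 1) (B - {b})) = (b - 1) + \<Sum> (B - {b})"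
    using assms(1,4) by simp
  ultimately show ?thesis using assms(3) by linarith
qed

lemma sum_lessThan_card_le_Sum: "finite B \<Longrightarrow> (\<Sum>i<card B. i) \<le> \<Sum> (B :: nat set)"
proof (induction "card B" arbitrary: B)
  case (Suc n)
  define M where "M = Max B"
  have "B \<noteq> {}" using Suc.hyps(2) by auto
  with Suc have M: "M \<in> B" "card (B - {M}) = n"
    by (auto simp: M_def)
  have "card B \<le> card {0..M}"
    using Suc.prems by (intro card_mono) (auto simp: M_def)
  then have "n \<le> M" using Suc.hyps(2) by simp
  moreover have "\<Sum> B = M + \<Sum> (B - {M})"
    using Suc.prems M(1) by (simp add: sum.remove)
  ultimately show ?case
    using Suc.hyps M(2) Suc.prems by (metis add_mono finite_Diff sum.lessThan_Suc add.commute)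
qed simp

lemma sum_lessThan_card_less_Sum:
  assumes "finite (B :: nat set)" "B \<noteq> {0..<card B}"
  shows "(\<Sum>i<card B. i) < \<Sum> B"
proof -
  obtain b where b: "b \<in> B" "0 < b" "b - 1 \<notin> B"
    using exists_movable_bead[OF assms] by blast
  let ?B' = "insert (b - 1) (B - {b})"
  have "(\<Sum>i<card B. i) \<le> \<Sum> ?B'"
    using sum_lessThan_card_le_Sum[of ?B'] card_move_bead[of B b] assms(1) b by simp
  also have "\<dots> < \<Sum> B"
    using sum_move_bead[OF assms(1) b] by simp
  finally show ?thesis .
qed

lemma mn_Cons_eq_0:
  assumes "\<And>b. b \<in> B \<Longrightarrow> b < k"
  shows "mn B (k # ks) = 0"
proof -
  have no_move: "{b \<in> B. k \<le> b \<and> b - k \<notin> B} = {}"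
    using assms by (auto simp: not_le)
  show ?thesis unfolding mn.simps no_move by simp
qed

lemma mn_Cons_1:
  "mn B (1 # ks) = (\<Sum>b\<in>{b\<in>B. 0 < b \<and> b - 1 \<notin> B}. mn (insert (b - 1) (B - {b})) ks)"
proof -
  have no_bead_between: "{c \<in> B. b - Suc 0 < c \<and> c < b} = {}" for b :: nat
    by auto
  show ?thesis
    unfolding mn.simps by (intro sum.cong) (auto simp: no_bead_between)
qed

lemma mn_replicate_1_nonneg: "0 \<le> mn B (replicate r 1)"
proof (induction r arbitrary: B)
  case (Suc r)
  then show ?case
    unfolding replicate_Suc mn_Cons_1 by (intro sum_nonneg) simp
qed simp

text \<open>\<open>mn B (replicate r 1)\<close> counts the standard tableaux of the partition with beta-set \<open>B\<close>;
  the hypothesis on \<open>\<Sum> B\<close> says that this partition has size \<open>r\<close>.\<close>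

lemma mn_replicate_1_pos:
  assumes "finite B" "\<Sum> B = r + (\<Sum>i<card B. i)"
  shows "0 < mn B (replicate r 1)"
  using assms
proof (induction r arbitrary: B)
  case 0
  then have "B = {0..<card B}"
    using sum_lessThan_card_less_Sum by fastforce
  then have "mn B [] = 1"
    by (simp only: mn.simps simp_thms if_True)
  then show ?case by simp
next
  case (Suc r)
  have "B \<noteq> {0..<card B}"
  proof
    assume "B = {0..<card B}"
    then have "\<Sum> B = (\<Sum>i<card B. i)" by (metis atLeast0LessThan)
    with Suc.prems(2) show False by simp
  qed
  then obtain b where b: "b \<in> B" "0 < b" "b - 1 \<notin> B"
    using exists_movable_bead Suc.prems(1) by blast
  let ?B' = "insert (b - 1) (B - {b})"
  have "\<Sum> ?B' = r + (\<Sum>i<card ?B'. i)"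
    using sum_move_bead[OF Suc.prems(1) b] card_move_bead[OF Suc.prems(1) b(1,3)] Suc.prems(2)
    by simp
  then have "0 < mn ?B' (replicate r 1)"
    using Suc.IH Suc.prems(1) by simp
  also have "\<dots> \<le> (\<Sum>b\<in>{b\<in>B. 0 < b \<and> b - 1 \<notin> B}. mn (insert (b - 1) (B - {b})) (replicate r 1))"
    using b Suc.prems(1) mn_replicate_1_nonneg by (intro member_le_sum) auto
  finally show ?case
    unfolding replicate_Suc mn_Cons_1 .
qed

lemma chi_Cons_eq_0:
  assumes "is_partition mu" "hook mu 1 1 < k"
  shows "chi mu (k # ks) = 0"
  unfolding chi_def using beta_set_le_hook[OF assms(1)] assms(2)
  by (intro mn_Cons_eq_0) (meson le_less_trans)

lemma chi_first_hook_ne_0: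
  assumes "is_partition mu" "mu \<noteq> []"
  shows "chi mu (hook mu 1 1 # replicate (sum_list mu - hook mu 1 1) 1) \<noteq> 0"
proof -
  define h where "h = hook mu 1 1"
  let ?B = "beta_set mu" and ?r = "sum_list mu - h"
  define B' where "B' = insert 0 (?B - {h})"
  have h: "h \<in> ?B" "0 \<notin> ?B" "finite ?B"
    using hook_in_beta_set[OF assms] zero_notin_beta_set[OF assms(1)]
    by (simp_all add: h_def beta_set_eq_image)
  have top: "{b \<in> ?B. h \<le> b \<and> b - h \<notin> ?B} = {h}"
    using h beta_set_le_hook[OF assms(1)] by (force simp: h_def)
  have "0 < card ?B"
    using h card_gt_0_iff by blast
  with h have "card B' = card ?B"
    by (simp add: B'_def)
  moreover have "\<Sum> ?B = h + \<Sum> B'"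
    using h by (simp add: B'_def sum.remove)
  ultimately have "\<Sum> B' = ?r + (\<Sum>i<card B'. i)"
    using sum_beta_set[OF assms(1)] card_beta_set[OF assms(1)] hook_1_1_le_sum_list[OF assms(1)]
    by (simp add: h_def)
  then have "0 < mn B' (replicate ?r 1)"
    using h(3) mn_replicate_1_pos[of B' ?r] by (simp add: B'_def)
  moreover have "chi mu (h # replicate ?r 1) =
      (-1) ^ card {c \<in> ?B. 0 < c \<and> c < h} * mn B' (replicate ?r 1)"
    unfolding chi_def mn.simps top by (simp add: B'_def)
  ultimately show ?thesis by (simp add: h_def)
qed

section \<open>The largest variable of a character polynomial\<close>

lemma finite_partitions_of: "finite (partitions_of m)"
proof (rule finite_subset)
  show "partitions_of m \<subseteq> {xs. set xs \<subseteq> {0..m} \<and> length xs \<le> m}"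
    using length_le_sum_list member_le_sum_list by (fastforce simp: partitions_of_def)
  show "finite {xs. set xs \<subseteq> {0..m} \<and> length xs \<le> m}"
    by (rule finite_lists_length_le) simp
qed

lemma zee_neq_0: "0 \<notin> set alpha \<Longrightarrow> zee alpha \<noteq> 0"
  unfolding zee_def by auto

definition pre_charpoly :: "nat list \<Rightarrow> mpoly" where
  "pre_charpoly mu = (\<Sum>alpha\<in>partitions_of (sum_list mu).
      Const (of_int (chi mu alpha) / of_nat (zee alpha)) * cycle_prod alpha)"

lemma charpoly_eq_down: "charpoly mu = down (pre_charpoly mu)"
  by (simp add: charpoly_def pre_charpoly_def cycle_prod_def)

lemma keys_pre_charpoly:
  assumes "c \<in> Poly_Mapping.keys (pre_charpoly mu)"
  obtains alpha where "alpha \<in> partitions_of (sum_list mu)" "chi mu alpha \<noteq> 0"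
    "monom_dvd c (cycle_monom alpha)"
proof -
  obtain alpha where alpha: "alpha \<in> partitions_of (sum_list mu)"
    and "c \<in> Poly_Mapping.keys
      (Const (of_int (chi mu alpha) / of_nat (zee alpha)) * cycle_prod alpha)"
    using subsetD[OF keys_sum assms[unfolded pre_charpoly_def]] by blast
  then have "chi mu alpha \<noteq> 0" "c \<in> Poly_Mapping.keys (cycle_prod alpha)"
    by (auto simp: in_keys_iff lookup_Const_mult)
  with alpha monoms_dvd_cycle_prod[of alpha] show ?thesis
    unfolding monoms_dvd_def by (blast intro: that)
qed

lemma lookup_pre_charpoly_cycle_monom:
  assumes a: "a \<in> partitions_of (sum_list mu)"
  shows "Poly_Mapping.lookup (pre_charpoly mu) (cycle_monom a) =
    of_int (chi mu a) / of_nat (zee a) * of_nat (prod_list a)"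
proof -
  let ?A = "partitions_of (sum_list mu)"
  let ?f = "\<lambda>alpha. of_int (chi mu alpha) / of_nat (zee alpha) *
    Poly_Mapping.lookup (cycle_prod alpha) (cycle_monom a)"
  have "?f alpha = 0" if "alpha \<in> ?A - {a}" for alpha
  proof -
    have "\<not> monom_dvd (cycle_monom a) (cycle_monom alpha)"
      using that a cycle_monom_dvd_imp_eq[of a alpha] by (auto simp: partitions_of_def)
    then have "cycle_monom a \<notin> Poly_Mapping.keys (cycle_prod alpha)"
      using monoms_dvd_cycle_prod[of alpha] by (auto simp: monoms_dvd_def)
    then show ?thesis by (simp add: in_keys_iff)
  qed
  then have "(\<Sum>alpha\<in>?A. ?f alpha) = ?f a"
    using sum.mono_neutral_left[of ?A "{a}" ?f] finite_partitions_of a by simp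
  then show ?thesis
    by (simp add: pre_charpoly_def lookup_sum lookup_Const_mult lookup_cycle_prod)
qed

lemma lookup_charpoly_cycle_monom:
  assumes a: "a \<in> partitions_of (sum_list mu)"
  shows "Poly_Mapping.lookup (charpoly mu) (cycle_monom a) =
    of_int (chi mu a) / of_nat (zee a) * of_nat (prod_list a)"
proof -
  have "c = cycle_monom a"
    if c: "c \<in> Poly_Mapping.keys (pre_charpoly mu)" and a_dvd: "monom_dvd (cycle_monom a) c" for c
  proof -
    obtain alpha where alpha: "alpha \<in> partitions_of (sum_list mu)"
      and dvd: "monom_dvd c (cycle_monom alpha)"
      using keys_pre_charpoly[OF c] by blast
    with a_dvd a have "alpha = a"
      using cycle_monom_dvd_imp_eq[of a alpha] monom_dvd_trans by (auto simp: partitions_of_def)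
    with dvd a_dvd show ?thesis by (simp add: monom_dvd_antisym)
  qed
  then have "Poly_Mapping.lookup (down (pre_charpoly mu)) (cycle_monom a) =
      Poly_Mapping.lookup (pre_charpoly mu) (cycle_monom a)"
    by (rule lookup_down_maximal)
  then show ?thesis
    unfolding charpoly_eq_down lookup_pre_charpoly_cycle_monom[OF a] .
qed

lemma occurring_vars_charpoly_le_hook:
  assumes "is_partition mu" "j \<in> occurring_vars (charpoly mu)"
  shows "j \<le> hook mu 1 1"
proof -
  obtain c where c: "c \<in> Poly_Mapping.keys (pre_charpoly mu)" and "j \<in> Poly_Mapping.keys c"
    using occurring_vars_down assms(2) unfolding charpoly_eq_down occurring_vars_def by blast
  moreover obtain alpha where alpha: "alpha \<in> partitions_of (sum_list mu)" "chi mu alpha \<noteq> 0"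
    and "monom_dvd c (cycle_monom alpha)"
    using keys_pre_charpoly[OF c] by blast
  ultimately have "j \<in> set alpha"
    using keys_subset_if_monom_dvd keys_cycle_monom by blast
  then obtain k ks where k: "alpha = k # ks" by (cases alpha) auto
  with alpha(1) \<open>j \<in> set alpha\<close> have "j \<le> k"
    by (auto simp: partitions_of_def is_partition_def)
  also have "k \<le> hook mu 1 1"
    using chi_Cons_eq_0[OF assms(1)] alpha(2) k by (meson not_le)
  finally show ?thesis .
qed

lemma hook_in_occurring_vars_charpoly:
  assumes mu: "is_partition mu" and pos: "0 < hook mu 1 1"
  shows "hook mu 1 1 \<in> occurring_vars (charpoly mu)"
proof -
  define h where "h = hook mu 1 1"
  define a where "a = h # replicate (sum_list mu - h) 1"
  have "mu \<noteq> []" using pos by (auto simp: hook_def)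
  have "sorted_wrt (\<lambda>a b. b \<le> a) (replicate r (1::nat))" for r
    by (induction r) auto
  with pos have "is_partition a"
    by (simp add: a_def is_partition_def h_def)
  moreover have "sum_list a = sum_list mu"
    using hook_1_1_le_sum_list[OF mu] by (simp add: a_def h_def sum_list_replicate)
  ultimately have "a \<in> partitions_of (sum_list mu)"
    by (simp add: partitions_of_def)
  moreover have "chi mu a \<noteq> 0" "zee a \<noteq> 0" "prod_list a \<noteq> 0"
    using chi_first_hook_ne_0[OF mu \<open>mu \<noteq> []\<close>] zee_neq_0[of a] pos
    by (simp_all add: a_def h_def)
  ultimately have "cycle_monom a \<in> Poly_Mapping.keys (charpoly mu)"
    by (simp add: in_keys_iff lookup_charpoly_cycle_monom)
  moreover have "h \<in> Poly_Mapping.keys (cycle_monom a)"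
    by (simp add: keys_cycle_monom a_def)
  ultimately show ?thesis
    unfolding occurring_vars_def h_def by blast
qed

theorem corollary3p2:
  fixes lam :: "nat list" and n :: nat
  assumes "is_partition lam" and "sum_list lam = n"
  shows "(hook lam 2 1 > 0 \<longrightarrow>
            hook lam 2 1 \<in> occurring_vars (charpoly (tl lam)) \<and>
            (\<forall>j\<in>occurring_vars (charpoly (tl lam)). j \<le> hook lam 2 1))
       \<and> (hook lam 1 2 > 0 \<longrightarrow>
            hook lam 1 2 \<in> occurring_vars (charpoly (tl (conjugate lam))) \<and>
            (\<forall>j\<in>occurring_vars (charpoly (tl (conjugate lam))). j \<le> hook lam 1 2))"
proof -
  have largest_var: "0 < hook mu 1 1 \<longrightarrow> hook mu 1 1 \<in> occurring_vars (charpoly mu) \<and>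
      (\<forall>j\<in>occurring_vars (charpoly mu). j \<le> hook mu 1 1)" if "is_partition mu" for mu
    using hook_in_occurring_vars_charpoly occurring_vars_charpoly_le_hook that by blast
  show ?thesis
    unfolding hook_2_1_eq_hook_tl[OF assms(1)] hook_1_2_eq_hook_tl_conjugate[OF assms(1)]
    using largest_var is_partition_tl is_partition_conjugate assms(1) by blast
qed

end
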